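(* Fix $s,s'\in S$ with $s\ne s_\star$, $j\in\{1,\dots,J\}$, and $a\in Act(s)$ with interface function $I_{s,a}\equiv\bar u_j$. Let $\mathbf{D}_N=\{(x_i,u_i,x_i^+)\}_{i=1}^N$ be a dataset with $x_i^+=f(x_i,u_i,\eta(\omega_i))$, where the noise outcomes $\omega_i$ are i.i.d. samples from $\mathbb{P}$ (and unobserved). Let $\mathbf{D}_N(\mathcal{T}^{-1}(s),\bar U_j)=\{(x,u,x^+)\in\mathbf{D}_N: x\in\mathcal{T}^{-1}(s),\ u\in\bar U_j\}=\{(x_i,u_i,x_i^+)\}_{i=1}^{M}$ (after relabelling), $M=|\mathbf{D}_N(\mathcal{T}^{-1}(s),\bar U_j)|$, and $F_i=\widehat F(x_i,u_i,x_i^+)$ for $i=1,\dots,M$. Define $$\check M=|\{i: F_i\subseteq\mathcal{T}^{-1}(s')\}|,\qquad \hat M=|\{i: F_i\cap\mathcal{T}^{-1}(s')\neq\emptyset\}|,$$ and, for $\beta\in(0,1)$, $\check P_{lb}=0$ if $\check M=0$ and otherwise the solution of $\frac{\beta}{2}=\sum_{\ell=\check M}^{M}\binom{M}{\ell}\check P_{lb}^{\ell}(1-\check P_{lb})^{M-\ell}$; $\hat P_{ub}=1$ if $\hat M=M$ and otherwise the solution of $\frac{\beta}{2}=\sum_{\ell=0}^{\hat M}\binom{M}{\ell}\hat P_{ub}^{\ell}(1-\hat P_{ub})^{M-\ell}$. Then, with probability at least $1-\beta$ over the noise samples, $$\check P_{lb}\le\check p(s,a,s')\quad\text{and}\quad\hat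 p(s,a,s')\le\hat P_{ub}.$$
   Context: System: $x_{k+1}=f(x_k,u_k,\eta_k)$ with $\mathcal{X}\subset\mathbb{R}^n$ compact, $\mathcal{U}\subseteq\mathbb{R}^m$, noise $\eta:\Omega\to\mathcal{W}$ on $(\Omega,\mathcal{F},\mathbb{P})$, $f:\mathcal{X}\times\mathcal{U}\times\mathcal{W}\to\mathcal{X}$ unknown but Lipschitz: there are known $L_X,L_U>0$ with $\|f(x_1,u_1,\eta(\omega))-f(x_2,u_2,\eta(\omega))\|\le L_X\|x_1-x_2\|+L_U\|u_1-u_2\|$ for all $x_1,x_2\in\mathcal{X}$, $u_1,u_2\in\mathcal{U}$, $\omega\in\Omega$. $\mathcal{X}$ is partitioned into disjoint convex polytopes $R_1,\dots,R_v$, $R_\star=\mathbb{R}^n\setminus\mathcal{X}$, abstract states $S=\{s_1,\dots,s_v,s_\star\}$, $\mathcal{T}(x)=s_i\iff x\in R_i$, $\mathcal{T}^{-1}(s)$ the region of $s$. $\mathcal{U}$ is partitioned into disjoint $\bar U_1,\dots,\bar U_J$ with representatives $\bar u_j\in\bar U_j$. For $a\in Act(s)$ the interface function is $I_{s,a}:\mathcal{T}^{-1}(s)\to\{\bar u_1,\dots,\bar u_J\}$. For compact $X'$: $\psi(x,X',a)=\mathbb{P}\{\omega: f(x,I_{\mathcal{T}(x),a}(x),\eta(\omega))\in X'\}$, $\check p(s,a,s')=\min_{x\in\mathcal{T}^{-1}(s)}\psi(x,\mathcal{T}^{-1}(s'),a)$, $\hat p(s,a,s')=\max_{x\in\mathcal{T}^{-1}(s)}\psi(x,\mathcal{T}^{-1}(s'),a)$.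 For a sample $(x,u,x^+)$ with $x\in\mathcal{T}^{-1}(s)$, $u\in\bar U_j$: $\widehat F(x,u,x^+)=\{\tilde x\in\mathcal{X}: \|\tilde x-x^+\|\le L_U\|u-\bar u_j\|+L_X\max_{\hat x\in\mathcal{T}^{-1}(s)}\|x-\hat x\|\}$. *)

theory Defs
  imports "HOL-Probability.Probability"
begin

definition binom_upper_tail :: "nat \<Rightarrow> nat \<Rightarrow> real \<Rightarrow> real" where
  "binom_upper_tail M k p = (\<Sum>l=k..M. real (M choose l) * p ^ l * (1 - p) ^ (M - l))"

definition binom_lower_tail :: "nat \<Rightarrow> nat \<Rightarrow> real \<Rightarrow> real" where
  "binom_lower_tail M k p = (\<Sum>l=0..k. real (M choose l) * p ^ l * (1 - p) ^ (M - l))"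

definition P_lb :: "real \<Rightarrow> nat \<Rightarrow> nat \<Rightarrow> real" where
  "P_lb \<beta> M Mc = (if Mc = 0 then 0
     else (THE p. 0 \<le> p \<and> p \<le> 1 \<and> \<beta> / 2 = binom_upper_tail M Mc p))"

definition P_ub :: "real \<Rightarrow> nat \<Rightarrow> nat \<Rightarrow> real" where
  "P_ub \<beta> M Mh = (if Mh = M then 1
     else (THE p. 0 \<le> p \<and> p \<le> 1 \<and> \<beta> / 2 = binom_lower_tail M Mh p))"

text \<open>Region of an abstract state: None is the absorbing state s_star (complement of X),
  Some i is s_i with region R i.\<close>
definition region :: "(nat \<Rightarrow> 'x set) \<Rightarrow> 'x set \<Rightarrow> nat option \<Rightarrow> 'x set" where
  "region R X s = (case s of None \<Rightarrow> UNIV - X | Some i \<Rightarrow> R i)"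

text \<open>The set Fhat(x,u,x+) for a sample with x in region Rs and u in the input cell with
  representative ubar.\<close>
definition Fhat :: "real \<Rightarrow> real \<Rightarrow> ('x::real_normed_vector) set \<Rightarrow> 'x set \<Rightarrow>
    ('u::real_normed_vector) \<Rightarrow> 'x \<Rightarrow> 'u \<Rightarrow> 'x \<Rightarrow> 'x set" where
  "Fhat LX LU X Rs ubar x u xp =
     {xt \<in> X. norm (xt - xp) \<le> LU * norm (u - ubar) + LX * (SUP xh\<in>Rs. norm (x - xh))}"

definition psi :: "'a measure \<Rightarrow> ('x \<Rightarrow> 'u \<Rightarrow> 'w \<Rightarrow> 'x) \<Rightarrow> ('a \<Rightarrow> 'w) \<Rightarrow> ('x \<Rightarrow> 'u) \<Rightarrow>
    'x \<Rightarrow> 'x set \<Rightarrow> real" where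
  "psi P f eta I x X' = measure P {\<omega> \<in> space P. f x (I x) (eta \<omega>) \<in> X'}"

definition p_check :: "'a measure \<Rightarrow> ('x \<Rightarrow> 'u \<Rightarrow> 'w \<Rightarrow> 'x) \<Rightarrow> ('a \<Rightarrow> 'w) \<Rightarrow> ('x \<Rightarrow> 'u) \<Rightarrow>
    'x set \<Rightarrow> 'x set \<Rightarrow> real" where
  "p_check P f eta I Rs Rs' = (INF x\<in>Rs. psi P f eta I x Rs')"

definition p_hat :: "'a measure \<Rightarrow> ('x \<Rightarrow> 'u \<Rightarrow> 'w \<Rightarrow> 'x) \<Rightarrow> ('a \<Rightarrow> 'w) \<Rightarrow> ('x \<Rightarrow> 'u) \<Rightarrow>
    'x set \<Rightarrow> 'x set \<Rightarrow> real" where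
  "p_hat P f eta I Rs Rs' = (SUP x\<in>Rs. psi P f eta I x Rs')"

end

theory Submission
  imports Defs "HOL-Analysis.Weierstrass_Theorems"
begin

(* Fix x in the region of s. The successors f x (ubar j) (eta w_i) of the M relevant samples
   are i.i.d., so the number of them landing in the region of s' is binomial with parameter
   psi x. By the Lipschitz bound each of these successors lies in the corresponding F_i, so
   this count is at least Mc and at most Mh, simultaneously for all x. The Clopper-Pearson
   bounds are built so that a binomial count with parameter p stays below k (above k) with
   probability at least 1 - beta/2 whenever p < P_lb k (p > P_ub k). It therefore suffices to
   apply this to one well-chosen x on each side and to take a union bound. *)

lemma binom_upper_tail_Bernstein: "binom_upper_tail n k p = (\<Sum>l=k..n. Bernstein n l p)"
  by (simp add: binom_upper_tail_def Bernstein_def)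

lemma binom_lower_tail_Bernstein: "binom_lower_tail n k p = (\<Sum>l=0..k. Bernstein n l p)"
  by (simp add: binom_lower_tail_def Bernstein_def)

lemma binom_upper_tail_0: "1 \<le> k \<Longrightarrow> binom_upper_tail n k 0 = 0"
  by (simp add: binom_upper_tail_def)

lemma binom_upper_tail_1:
  assumes "k \<le> n"
  shows "binom_upper_tail n k 1 = 1"
proof -
  from assms have "binom_upper_tail n k 1 = (\<Sum>l\<in>{n}. real (n choose l) * 1 ^ l * (1 - 1) ^ (n - l))"
    unfolding binom_upper_tail_def by (intro sum.mono_neutral_right) auto
  then show ?thesis by simp
qed

lemma binom_lower_tail_eq_1_minus_upper:
  assumes "k < n"
  shows "binom_lower_tail n k p = 1 - binom_upper_tail n (Suc k) p"
proof -
  have "{..n} = {0..k} \<union> {Suc k..n}" using assms by auto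
  then have "(\<Sum>l\<le>n. Bernstein n l p) = (\<Sum>l=0..k. Bernstein n l p) + (\<Sum>l=Suc k..n. Bernstein n l p)"
    by (simp add: sum.union_disjoint)
  then show ?thesis by (simp add: binom_lower_tail_Bernstein binom_upper_tail_Bernstein)
qed

lemma continuous_on_binom_upper_tail: "continuous_on S (binom_upper_tail n k)"
  unfolding binom_upper_tail_def by (intro continuous_intros)

lemma has_real_derivative_Bernstein:
  "(Bernstein (Suc n) (Suc k) has_real_derivative
     real (Suc n) * (Bernstein n k p - Bernstein n (Suc k) p)) (at p)"
proof (cases "k \<le> n")
  case True
  define c where "c = real (Suc n choose Suc k)"
  have "Bernstein (Suc n) (Suc k) = (\<lambda>p. c * p ^ Suc k * (1 - p) ^ (n - k))"
    by (simp add: Bernstein_def c_def fun_eq_iff)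
  moreover have "((\<lambda>p. c * p ^ Suc k * (1 - p) ^ (n - k)) has_real_derivative
      c * p ^ Suc k * (- real (n - k) * (1 - p) ^ (n - Suc k))
      + c * (real (Suc k) * p ^ k) * (1 - p) ^ (n - k)) (at p)"
  proof (rule DERIV_mult'[OF DERIV_cmult])
    show "((\<lambda>p. p ^ Suc k) has_real_derivative real (Suc k) * p ^ k) (at p)"
      using DERIV_pow[of "Suc k" p] by simp
    show "((\<lambda>p. (1 - p) ^ (n - k)) has_real_derivative - real (n - k) * (1 - p) ^ (n - Suc k)) (at p)"
      using DERIV_power[OF DERIV_diff[OF DERIV_const[of 1] DERIV_ident], of "n - k" p] by simp
  qed
  moreover have "c * p ^ Suc k * (- real (n - k) * (1 - p) ^ (n - Suc k))
      + c * (real (Suc k) * p ^ k) * (1 - p) ^ (n - k)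
      = real (Suc n) * (Bernstein n k p - Bernstein n (Suc k) p)"
  proof -
    have a: "real (Suc k) * c = real (Suc n) * real (n choose k)"
      unfolding c_def by (metis Suc_times_binomial of_nat_mult)
    have b: "real (n - k) * c = real (Suc n) * real (n choose Suc k)"
      unfolding c_def by (metis binomial_absorb_comp diff_Suc_1 diff_Suc_Suc of_nat_mult)
    have "c * p ^ Suc k * (- real (n - k) * (1 - p) ^ (n - Suc k))
        + c * (real (Suc k) * p ^ k) * (1 - p) ^ (n - k)
        = (real (Suc k) * c) * p ^ k * (1 - p) ^ (n - k)
          - (real (n - k) * c) * p ^ Suc k * (1 - p) ^ (n - Suc k)"
      by (simp add: algebra_simps)
    also have "\<dots> = real (Suc n) * (Bernstein n k p - Bernstein n (Suc k) p)"
      unfolding a b Bernstein_def by (simp add: algebra_simps)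
    finally show ?thesis .
  qed
  ultimately show ?thesis
    by simp
next
  case False
  then have "Bernstein (Suc n) (Suc k) = (\<lambda>_. 0)" "Bernstein n k p = 0" "Bernstein n (Suc k) p = 0"
    by (simp_all add: Bernstein_def fun_eq_iff not_le binomial_eq_0)
  then show ?thesis
    by (simp only: diff_zero mult_zero_right DERIV_const)
qed

lemma has_real_derivative_binom_upper_tail:
  assumes "k \<le> n"
  shows "(binom_upper_tail (Suc n) (Suc k) has_real_derivative real (Suc n) * Bernstein n k p) (at p)"
proof -
  have "binom_upper_tail (Suc n) (Suc k) = (\<lambda>p. \<Sum>l=k..n. Bernstein (Suc n) (Suc l) p)"
    unfolding binom_upper_tail_Bernstein by (rule ext, subst sum.shift_bounds_cl_Suc_ivl) simp
  moreover have "((\<lambda>p. \<Sum>l=k..n. Bernstein (Suc n) (Suc l) p) has_real_derivative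
      (\<Sum>l=k..n. real (Suc n) * (Bernstein n l p - Bernstein n (Suc l) p))) (at p)"
    by (intro DERIV_sum has_real_derivative_Bernstein)
  moreover have "(\<Sum>l=k..n. Bernstein n l p - Bernstein n (Suc l) p) = Bernstein n k p"
    using sum_Suc_diff[OF le_SucI[OF assms], of "\<lambda>l. - Bernstein n l p"]
    by (simp add: Bernstein_def)
  ultimately show ?thesis
    by (simp add: sum_distrib_left[symmetric])
qed

lemma strict_mono_on_binom_upper_tail:
  assumes "1 \<le> k" "k \<le> n"
  shows "strict_mono_on {0..1} (binom_upper_tail n k)"
proof (rule strict_mono_onI)
  obtain m k' where n: "n = Suc m" and k: "k = Suc k'" and "k' \<le> m"
    using assms by (cases n; cases k) auto
  fix a b :: real
  assume "a \<in> {0..1}" "b \<in> {0..1}" "a < b"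
  then show "binom_upper_tail n k a < binom_upper_tail n k b"
    unfolding n k
  proof (intro DERIV_pos_imp_increasing_open[OF \<open>a < b\<close>] continuous_on_binom_upper_tail)
    fix x assume "a < x" "x < b"
    with \<open>a \<in> {0..1}\<close> \<open>b \<in> {0..1}\<close> \<open>k' \<le> m\<close> have "0 < real (Suc m) * Bernstein m k' x"
      by (simp add: Bernstein_pos)
    with has_real_derivative_binom_upper_tail[OF \<open>k' \<le> m\<close>]
    show "\<exists>y. (binom_upper_tail (Suc m) (Suc k') has_real_derivative y) (at x) \<and> 0 < y"
      by blast
  qed
qed

lemma strict_antimono_on_binom_lower_tail:
  assumes "k < n"
  shows "strict_antimono_on {0..1} (binom_lower_tail n k)"
  using strict_mono_onD[OF strict_mono_on_binom_upper_tail[of "Suc k" n]] assms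
  by (intro monotone_onI) (simp add: binom_lower_tail_eq_1_minus_upper)

lemma binom_upper_tail_eq_ex1:
  assumes "1 \<le> k" "k \<le> n" "0 < c" "c < 1"
  shows "\<exists>!p. 0 \<le> p \<and> p \<le> 1 \<and> c = binom_upper_tail n k p"
proof -
  have "\<exists>p\<ge>0. p \<le> 1 \<and> binom_upper_tail n k p = c"
    using assms binom_upper_tail_0[of k n] binom_upper_tail_1[of k n]
      continuous_on_binom_upper_tail[of UNIV n k]
    by (intro IVT) (auto simp: continuous_on_eq_continuous_at)
  moreover have "inj_on (binom_upper_tail n k) {0..1}"
    using strict_mono_on_binom_upper_tail[OF assms(1,2)] by (rule strict_mono_on_imp_inj_on)
  ultimately show ?thesis
    by (metis atLeastAtMost_iff inj_onD)
qed

lemma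
  assumes "1 \<le> k" "k \<le> n" "0 < \<beta>" "\<beta> < 1"
  shows P_lb_in_unit_interval: "P_lb \<beta> n k \<in> {0..1}"
    and binom_upper_tail_P_lb: "binom_upper_tail n k (P_lb \<beta> n k) = \<beta> / 2"
proof -
  have "\<exists>!p. 0 \<le> p \<and> p \<le> 1 \<and> \<beta> / 2 = binom_upper_tail n k p"
    using assms by (intro binom_upper_tail_eq_ex1) auto
  from theI'[OF this] assms(1) show "P_lb \<beta> n k \<in> {0..1}" "binom_upper_tail n k (P_lb \<beta> n k) = \<beta> / 2"
    unfolding P_lb_def by auto
qed

lemma
  assumes "k < n" "0 < \<beta>" "\<beta> < 1"
  shows P_ub_in_unit_interval: "P_ub \<beta> n k \<in> {0..1}"
    and binom_lower_tail_P_ub: "binom_lower_tail n k (P_ub \<beta> n k) = \<beta> / 2"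
proof -
  have "\<exists>!p. 0 \<le> p \<and> p \<le> 1 \<and> 1 - \<beta> / 2 = binom_upper_tail n (Suc k) p"
    using assms by (intro binom_upper_tail_eq_ex1) auto
  then have "\<exists>!p. 0 \<le> p \<and> p \<le> 1 \<and> \<beta> / 2 = binom_lower_tail n k p"
    using assms(1) by (simp add: binom_lower_tail_eq_1_minus_upper algebra_simps)
  from theI'[OF this] assms(1) show "P_ub \<beta> n k \<in> {0..1}" "binom_lower_tail n k (P_ub \<beta> n k) = \<beta> / 2"
    unfolding P_ub_def by auto
qed

lemma measure_binomial_pmf:
  assumes "p \<in> {0..1}"
  shows "measure_pmf.prob (binomial_pmf n p) A = (\<Sum>k\<in>A \<inter> {..n}. Bernstein n k p)"
proof -
  have "measure_pmf.prob (binomial_pmf n p) A = measure_pmf.prob (binomial_pmf n p) (A \<inter> {..n})"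
    using assms set_pmf_binomial_eq[of p n]
    by (intro measure_pmf.finite_measure_eq_AE AE_pmfI) (auto split: if_splits)
  also have "\<dots> = (\<Sum>k\<in>A \<inter> {..n}. Bernstein n k p)"
    using assms by (simp add: measure_measure_pmf_finite Bernstein_def)
  finally show ?thesis .
qed

lemma measure_binomial_pmf_atLeast:
  "p \<in> {0..1} \<Longrightarrow> measure_pmf.prob (binomial_pmf n p) {k..} = binom_upper_tail n k p"
  by (simp add: measure_binomial_pmf binom_upper_tail_Bernstein atLeastAtMost_def)

lemma measure_binomial_pmf_atMost:
  "p \<in> {0..1} \<Longrightarrow> measure_pmf.prob (binomial_pmf n p) {..k} = binom_lower_tail n k p"
  unfolding measure_binomial_pmf binom_lower_tail_Bernstein
  by (intro sum.mono_neutral_left) (auto simp: Bernstein_def)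

definition has_binomial_distribution :: "'a measure \<Rightarrow> ('a \<Rightarrow> nat) \<Rightarrow> nat \<Rightarrow> real \<Rightarrow> bool" where
  "has_binomial_distribution Q B n p \<longleftrightarrow>
     B \<in> Q \<rightarrow>\<^sub>M count_space UNIV \<and> distr Q (count_space UNIV) B = measure_pmf (binomial_pmf n p)"

lemma
  assumes "has_binomial_distribution Q B n p"
  shows sets_has_binomial_distribution: "{\<omega> \<in> space Q. B \<omega> \<in> A} \<in> sets Q"
    and measure_has_binomial_distribution:
      "measure Q {\<omega> \<in> space Q. B \<omega> \<in> A} = measure_pmf.prob (binomial_pmf n p) A"
proof -
  have B: "B \<in> Q \<rightarrow>\<^sub>M count_space UNIV" and distr: "distr Q (count_space UNIV) B = binomial_pmf n p"
    using assms unfolding has_binomial_distribution_def by auto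
  have eq: "{\<omega> \<in> space Q. B \<omega> \<in> A} = B -` A \<inter> space Q" by auto
  show "{\<omega> \<in> space Q. B \<omega> \<in> A} \<in> sets Q"
    unfolding eq using B by (rule measurable_sets) simp
  show "measure Q {\<omega> \<in> space Q. B \<omega> \<in> A} = measure_pmf.prob (binomial_pmf n p) A"
    unfolding eq using measure_distr[OF B, of A] by (simp add: distr)
qed

lemma
  assumes "has_binomial_distribution Q B n p" "p \<in> {0..1}"
  shows measure_binomial_less: "measure Q {\<omega> \<in> space Q. B \<omega> < k} = 1 - binom_upper_tail n k p"
    and measure_binomial_greater: "measure Q {\<omega> \<in> space Q. k < B \<omega>} = 1 - binom_lower_tail n k p"
proof -
  have "measure Q {\<omega> \<in> space Q. B \<omega> < k} = measure_pmf.prob (binomial_pmf n p) (UNIV - {k..})"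
    using measure_has_binomial_distribution[OF assms(1), of "UNIV - {k..}"] by (simp add: not_le)
  then show "measure Q {\<omega> \<in> space Q. B \<omega> < k} = 1 - binom_upper_tail n k p"
    using measure_pmf.prob_compl[of "{k..}"] assms(2) by (simp add: measure_binomial_pmf_atLeast)
  have "measure Q {\<omega> \<in> space Q. k < B \<omega>} = measure_pmf.prob (binomial_pmf n p) (UNIV - {..k})"
    using measure_has_binomial_distribution[OF assms(1), of "UNIV - {..k}"] by (simp add: not_le)
  then show "measure Q {\<omega> \<in> space Q. k < B \<omega>} = 1 - binom_lower_tail n k p"
    using measure_pmf.prob_compl[of "{..k}"] assms(2) by (simp add: measure_binomial_pmf_atMost)
qed

lemma
  fixes H :: "'b \<Rightarrow> bool"
  assumes "prob_space P" "{w \<in> space P. H w} \<in> sets P" "D \<subseteq> I" "finite D" "S \<subseteq> D"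
  shows sets_PiM_successes_eq:
      "{\<omega> \<in> space (PiM I (\<lambda>_. P)). {i\<in>D. H (\<omega> i)} = S} \<in> sets (PiM I (\<lambda>_. P))"
    and measure_PiM_successes_eq:
      "measure (PiM I (\<lambda>_. P)) {\<omega> \<in> space (PiM I (\<lambda>_. P)). {i\<in>D. H (\<omega> i)} = S}
         = measure P {w \<in> space P. H w} ^ card S * (1 - measure P {w \<in> space P. H w}) ^ (card D - card S)"
proof -
  interpret P: prob_space P by fact
  interpret Q: product_prob_space "\<lambda>_. P" I by unfold_locales
  define E where "E = {w \<in> space P. H w}"
  have E: "E \<in> sets P" using assms(2) unfolding E_def .
  define X where "X i = (if i \<in> S then E else space P - E)" for i
  have "{i\<in>D. H (\<omega> i)} = S \<longleftrightarrow> (\<forall>i\<in>D. \<omega> i \<in> X i)" if "\<omega> \<in> space (PiM I (\<lambda>_. P))" for \<omega>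
  proof -
    have "\<omega> i \<in> space P" if "i \<in> D" for i
      using \<open>\<omega> \<in> space (PiM I (\<lambda>_. P))\<close> assms(3) that by (auto simp: space_PiM)
    then show ?thesis
      using assms(5) unfolding X_def E_def by auto
  qed
  then have "{\<omega> \<in> space (PiM I (\<lambda>_. P)). {i\<in>D. H (\<omega> i)} = S}
      = {\<omega> \<in> space (PiM I (\<lambda>_. P)). \<forall>i\<in>D. \<omega> i \<in> X i}"
    by blast
  also have "\<dots> = prod_emb I (\<lambda>_. P) D (\<Pi>\<^sub>E i\<in>D. X i)"
    using assms(3) unfolding prod_emb_def by (auto simp: space_PiM Pi_iff)
  finally have eq: "{\<omega> \<in> space (PiM I (\<lambda>_. P)). {i\<in>D. H (\<omega> i)} = S}
      = prod_emb I (\<lambda>_. P) D (\<Pi>\<^sub>E i\<in>D. X i)" .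
  show "{\<omega> \<in> space (PiM I (\<lambda>_. P)). {i\<in>D. H (\<omega> i)} = S} \<in> sets (PiM I (\<lambda>_. P))"
    unfolding eq X_def using assms(3,4) E by (intro sets_PiM_I) auto
  have "measure (PiM I (\<lambda>_. P)) {\<omega> \<in> space (PiM I (\<lambda>_. P)). {i\<in>D. H (\<omega> i)} = S}
      = (\<Prod>i\<in>D. if i \<in> S then measure P E else 1 - measure P E)"
    unfolding eq X_def using assms(3,4) E
    by (subst Q.measure_PiM_emb) (auto simp: P.prob_compl intro!: prod.cong)
  also have "\<dots> = measure P E ^ card S * (1 - measure P E) ^ card (D - S)"
    using assms(4,5) by (simp add: prod.If_cases Int_absorb1 Diff_eq)
  finally show "measure (PiM I (\<lambda>_. P)) {\<omega> \<in> space (PiM I (\<lambda>_. P)). {i\<in>D. H (\<omega> i)} = S}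
      = measure P {w \<in> space P. H w} ^ card S * (1 - measure P {w \<in> space P. H w}) ^ (card D - card S)"
    using assms(4,5) by (simp add: E_def card_Diff_subset finite_subset)
qed

lemma has_binomial_distribution_card_PiM:
  fixes H :: "'b \<Rightarrow> bool"
  assumes "prob_space P" "{w \<in> space P. H w} \<in> sets P" "D \<subseteq> I" "finite D"
  shows "has_binomial_distribution (PiM I (\<lambda>_. P)) (\<lambda>\<omega>. card {i\<in>D. H (\<omega> i)}) (card D)
           (measure P {w \<in> space P. H w})"
proof -
  interpret Q: prob_space "PiM I (\<lambda>_. P)"
    using assms(1) by (intro prob_space_PiM)
  let ?Q = "PiM I (\<lambda>_. P)" and ?B = "\<lambda>\<omega>. card {i\<in>D. H (\<omega> i)}" and ?p = "measure P {w \<in> space P. H w}"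
  let ?fiber = "\<lambda>S. {\<omega> \<in> space ?Q. {i\<in>D. H (\<omega> i)} = S}"
  have fin: "finite {S. S \<subseteq> D \<and> card S = k}" for k
    using assms(4) by (auto intro: finite_subset[of _ "Pow D"])
  have level_set: "?B -` {k} \<inter> space ?Q = (\<Union>S\<in>{S. S \<subseteq> D \<and> card S = k}. ?fiber S)" for k
    by auto
  have level_set_sets: "?B -` {k} \<inter> space ?Q \<in> sets ?Q" for k
    unfolding level_set using fin by (intro sets.finite_UN sets_PiM_successes_eq[OF assms]) auto
  have "measure ?Q (?B -` {k} \<inter> space ?Q) = (\<Sum>S | S \<subseteq> D \<and> card S = k. measure ?Q (?fiber S))" for k
    unfolding level_set using fin
    by (intro Q.finite_measure_finite_Union)
       (auto simp: disjoint_family_on_def intro: sets_PiM_successes_eq[OF assms])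
  also have "\<dots> k = pmf (binomial_pmf (card D) ?p) k" for k
    using assms(4) prob_space.prob_le_1[OF assms(1)]
    by (simp add: measure_PiM_successes_eq[OF assms] n_subsets)
  finally have level_set_measure: "measure ?Q (?B -` {k} \<inter> space ?Q) = pmf (binomial_pmf (card D) ?p) k" for k .
  have B: "?B \<in> ?Q \<rightarrow>\<^sub>M count_space UNIV"
    using level_set_sets by (simp add: measurable_count_space_eq2_countable)
  have "distr ?Q (count_space UNIV) ?B = measure_pmf (binomial_pmf (card D) ?p)"
  proof (rule measure_eqI_countable[where A = UNIV])
    fix k :: nat
    show "emeasure (distr ?Q (count_space UNIV) ?B) {k} = emeasure (binomial_pmf (card D) ?p) {k}"
      using level_set_measure[of k] B
      by (simp add: emeasure_distr Q.emeasure_eq_measure emeasure_pmf_single)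
  qed simp_all
  with B show ?thesis
    unfolding has_binomial_distribution_def by simp
qed

lemma coverage_P_lb:
  assumes "has_binomial_distribution Q B n p" "p \<in> {0..1}"
    and "1 \<le> k" "k \<le> n" "0 < \<beta>" "\<beta> < 1" "p < P_lb \<beta> n k"
  shows "1 - \<beta> / 2 \<le> measure Q {\<omega> \<in> space Q. B \<omega> < k}"
proof -
  have "binom_upper_tail n k p < binom_upper_tail n k (P_lb \<beta> n k)"
    using strict_mono_onD[OF strict_mono_on_binom_upper_tail[OF assms(3,4)]] assms(2,7)
      P_lb_in_unit_interval[OF assms(3-6)]
    by blast
  then show ?thesis
    using measure_binomial_less[OF assms(1,2), of k] binom_upper_tail_P_lb[OF assms(3-6)] by linarith
qed

lemma coverage_P_ub:
  assumes "has_binomial_distribution Q B n p" "p \<in> {0..1}"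
    and "k < n" "0 < \<beta>" "\<beta> < 1" "P_ub \<beta> n k < p"
  shows "1 - \<beta> / 2 \<le> measure Q {\<omega> \<in> space Q. k < B \<omega>}"
proof -
  have "binom_lower_tail n k p < binom_lower_tail n k (P_ub \<beta> n k)"
    using monotone_onD[OF strict_antimono_on_binom_lower_tail[OF assms(3)], of "P_ub \<beta> n k" p]
      assms(2,6) P_ub_in_unit_interval[OF assms(3-5)]
    by auto
  then show ?thesis
    using measure_binomial_greater[OF assms(1,2), of k] binom_lower_tail_P_ub[OF assms(3-5)] by linarith
qed

lemma P_lb_le_INF_with_confidence:
  fixes B :: "'x \<Rightarrow> 'a \<Rightarrow> nat" and C :: "'a \<Rightarrow> nat"
  assumes Q: "prob_space Q" and "0 < \<beta>" "\<beta> < 1" and "S \<noteq> {}"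
    and p: "\<And>x. x \<in> S \<Longrightarrow> p x \<in> {0..1}"
    and B: "\<And>x. x \<in> S \<Longrightarrow> has_binomial_distribution Q (B x) n (p x)"
    and C_le_B: "\<And>x \<omega>. x \<in> S \<Longrightarrow> \<omega> \<in> space Q \<Longrightarrow> C \<omega> \<le> B x \<omega>"
    and C_le: "\<And>\<omega>. \<omega> \<in> space Q \<Longrightarrow> C \<omega> \<le> n"
  shows "\<exists>A\<in>sets Q. 1 - \<beta> / 2 \<le> measure Q A \<and> (\<forall>\<omega>\<in>A. P_lb \<beta> n (C \<omega>) \<le> (INF x\<in>S. p x))"
proof (cases "\<exists>k\<le>n. (INF x\<in>S. p x) < P_lb \<beta> n k")
  case False
  then show ?thesis
    using C_le \<open>\<beta> > 0\<close> prob_space.prob_space[OF Q] by (intro bexI[of _ "space Q"]) (auto simp: not_less)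
next
  case True
  then obtain k0 where k0: "k0 \<le> n" "(INF x\<in>S. p x) < P_lb \<beta> n k0" by blast
  \<comment> \<open>k is the least count whose bound overshoots the infimum. A single x with p x < P_lb k
    then suffices: on the event B x < k, C \<le> B x keeps P_lb (C \<omega>) below the infimum.\<close>
  define k where "k = (LEAST k. (INF x\<in>S. p x) < P_lb \<beta> n k)"
  have k: "(INF x\<in>S. p x) < P_lb \<beta> n k" "k \<le> n"
    using LeastI[of "\<lambda>k. (INF x\<in>S. p x) < P_lb \<beta> n k", OF k0(2)]
      Least_le[of "\<lambda>k. (INF x\<in>S. p x) < P_lb \<beta> n k", OF k0(2)] k0(1)
    unfolding k_def by auto
  have below_k: "P_lb \<beta> n c \<le> (INF x\<in>S. p x)" if "c < k" for c
    using not_less_Least[OF that[unfolded k_def]] by simp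
  have bdd: "bdd_below (p ` S)"
    using p by (intro bdd_belowI2[where m = 0]) auto
  have "0 \<le> (INF x\<in>S. p x)"
    using p \<open>S \<noteq> {}\<close> by (intro cINF_greatest) auto
  with k(1) have "1 \<le> k"
    by (cases k) (auto simp: P_lb_def)
  obtain x where x: "x \<in> S" "p x < P_lb \<beta> n k"
    using k(1) cINF_less_iff[OF \<open>S \<noteq> {}\<close> bdd] by auto
  define A where "A = {\<omega> \<in> space Q. B x \<omega> < k}"
  have "A \<in> sets Q"
    using sets_has_binomial_distribution[OF B[OF x(1)], of "{..<k}"] unfolding A_def by simp
  moreover have "1 - \<beta> / 2 \<le> measure Q A"
    unfolding A_def using B[OF x(1)] p[OF x(1)] \<open>1 \<le> k\<close> k(2) \<open>0 < \<beta>\<close> \<open>\<beta> < 1\<close> x(2)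
    by (rule coverage_P_lb)
  moreover have "P_lb \<beta> n (C \<omega>) \<le> (INF x\<in>S. p x)" if "\<omega> \<in> A" for \<omega>
  proof -
    from that have "\<omega> \<in> space Q" "B x \<omega> < k"
      unfolding A_def by auto
    with C_le_B[OF x(1)] below_k show ?thesis
      by (meson le_less_trans)
  qed
  ultimately show ?thesis
    by (intro bexI[of _ A]) auto
qed

lemma SUP_le_P_ub_with_confidence:
  fixes B :: "'x \<Rightarrow> 'a \<Rightarrow> nat" and C :: "'a \<Rightarrow> nat"
  assumes Q: "prob_space Q" and "0 < \<beta>" "\<beta> < 1" and "S \<noteq> {}"
    and p: "\<And>x. x \<in> S \<Longrightarrow> p x \<in> {0..1}"
    and B: "\<And>x. x \<in> S \<Longrightarrow> has_binomial_distribution Q (B x) n (p x)"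
    and B_le_C: "\<And>x \<omega>. x \<in> S \<Longrightarrow> \<omega> \<in> space Q \<Longrightarrow> B x \<omega> \<le> C \<omega>"
    and C_le: "\<And>\<omega>. \<omega> \<in> space Q \<Longrightarrow> C \<omega> \<le> n"
  shows "\<exists>A\<in>sets Q. 1 - \<beta> / 2 \<le> measure Q A \<and> (\<forall>\<omega>\<in>A. (SUP x\<in>S. p x) \<le> P_ub \<beta> n (C \<omega>))"
proof (cases "\<exists>k\<le>n. P_ub \<beta> n k < (SUP x\<in>S. p x)")
  case False
  then show ?thesis
    using C_le \<open>\<beta> > 0\<close> prob_space.prob_space[OF Q] by (intro bexI[of _ "space Q"]) (auto simp: not_less)
next
  case True
  let ?T = "\<lambda>k. k \<le> n \<and> P_ub \<beta> n k < (SUP x\<in>S. p x)"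
  define k where "k = (GREATEST k. ?T k)"
  have k: "k \<le> n" "P_ub \<beta> n k < (SUP x\<in>S. p x)"
    using True GreatestI_nat[of ?T _ n] unfolding k_def by blast+
  have above_k: "(SUP x\<in>S. p x) \<le> P_ub \<beta> n c" if "k < c" "c \<le> n" for c
    using that Greatest_le_nat[of ?T c n] unfolding k_def by force
  have bdd: "bdd_above (p ` S)"
    using p by (intro bdd_aboveI2[where M = 1]) auto
  have "(SUP x\<in>S. p x) \<le> 1"
    using p \<open>S \<noteq> {}\<close> by (intro cSUP_least) auto
  with k have "k < n"
    by (cases "k = n") (auto simp: P_ub_def)
  obtain x where x: "x \<in> S" "P_ub \<beta> n k < p x"
    using k(2) less_cSUP_iff[OF \<open>S \<noteq> {}\<close> bdd] by auto
  define A where "A = {\<omega> \<in> space Q. k < B x \<omega>}"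
  have "A \<in> sets Q"
    using sets_has_binomial_distribution[OF B[OF x(1)], of "{k<..}"] unfolding A_def by simp
  moreover have "1 - \<beta> / 2 \<le> measure Q A"
    unfolding A_def using B[OF x(1)] p[OF x(1)] \<open>k < n\<close> \<open>0 < \<beta>\<close> \<open>\<beta> < 1\<close> x(2)
    by (rule coverage_P_ub)
  moreover have "(SUP x\<in>S. p x) \<le> P_ub \<beta> n (C \<omega>)" if "\<omega> \<in> A" for \<omega>
  proof -
    from that have "\<omega> \<in> space Q" "k < B x \<omega>"
      unfolding A_def by auto
    with B_le_C[OF x(1)] C_le above_k show ?thesis
      by (meson less_le_trans)
  qed
  ultimately show ?thesis
    by (intro bexI[of _ A]) auto
qed

lemma binomial_confidence_interval:
  fixes B :: "'x \<Rightarrow> 'a \<Rightarrow> nat" and Cl Cu :: "'a \<Rightarrow> nat"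
  assumes Q: "prob_space Q" and \<beta>: "0 < \<beta>" "\<beta> < 1" and S: "S \<noteq> {}"
    and p: "\<And>x. x \<in> S \<Longrightarrow> p x \<in> {0..1}"
    and B: "\<And>x. x \<in> S \<Longrightarrow> has_binomial_distribution Q (B x) n (p x)"
    and Cl_le_B: "\<And>x \<omega>. x \<in> S \<Longrightarrow> \<omega> \<in> space Q \<Longrightarrow> Cl \<omega> \<le> B x \<omega>"
    and B_le_Cu: "\<And>x \<omega>. x \<in> S \<Longrightarrow> \<omega> \<in> space Q \<Longrightarrow> B x \<omega> \<le> Cu \<omega>"
    and Cu_le: "\<And>\<omega>. \<omega> \<in> space Q \<Longrightarrow> Cu \<omega> \<le> n"
  shows "\<exists>A\<in>sets Q. 1 - \<beta> \<le> measure Q A \<and>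
           (\<forall>\<omega>\<in>A. P_lb \<beta> n (Cl \<omega>) \<le> (INF x\<in>S. p x) \<and> (SUP x\<in>S. p x) \<le> P_ub \<beta> n (Cu \<omega>))"
proof -
  interpret Q: prob_space Q by fact
  obtain x0 where "x0 \<in> S" using S by blast
  have "Cl \<omega> \<le> n" if "\<omega> \<in> space Q" for \<omega>
    using Cl_le_B[OF \<open>x0 \<in> S\<close> that] B_le_Cu[OF \<open>x0 \<in> S\<close> that] Cu_le[OF that] by linarith
  from P_lb_le_INF_with_confidence[OF Q \<beta> S p B Cl_le_B this]
  obtain A1 where A1: "A1 \<in> sets Q"
    "1 - \<beta> / 2 \<le> measure Q A1 \<and> (\<forall>\<omega>\<in>A1. P_lb \<beta> n (Cl \<omega>) \<le> (INF x\<in>S. p x))"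
    by (rule bexE)
  from SUP_le_P_ub_with_confidence[OF Q \<beta> S p B B_le_Cu Cu_le]
  obtain A2 where A2: "A2 \<in> sets Q"
    "1 - \<beta> / 2 \<le> measure Q A2 \<and> (\<forall>\<omega>\<in>A2. (SUP x\<in>S. p x) \<le> P_ub \<beta> n (Cu \<omega>))"
    by (rule bexE)
  have "measure Q (A1 - A2) \<le> measure Q (space Q - A2)"
    using A1(1) A2(1) sets.sets_into_space[OF A1(1)] by (intro Q.finite_measure_mono) auto
  then have "1 - \<beta> \<le> measure Q (A1 \<inter> A2)"
    using A1 A2 Q.finite_measure_Diff'[OF A1(1) A2(1)] Q.prob_compl[OF A2(1)] by linarith
  with A1 A2 show ?thesis
    by (intro bexI[of _ "A1 \<inter> A2"]) auto
qed

lemma mem_FhatI: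
  assumes "y \<in> X" "x \<in> Rs" "bounded Rs" "0 \<le> LX"
    and "norm (y - xp) \<le> LX * norm (x - x0) + LU * norm (ubar - u)"
  shows "y \<in> Fhat LX LU X Rs ubar x0 u xp"
proof -
  obtain b where b: "\<forall>z\<in>Rs. norm z \<le> b"
    using \<open>bounded Rs\<close> unfolding bounded_iff by blast
  have "bdd_above ((\<lambda>xh. norm (x0 - xh)) ` Rs)"
  proof (rule bdd_aboveI2[where M = "norm x0 + b"])
    fix xh assume "xh \<in> Rs"
    then show "norm (x0 - xh) \<le> norm x0 + b"
      using b norm_triangle_ineq4[of x0 xh] by force
  qed
  then have "norm (x - x0) \<le> (SUP xh\<in>Rs. norm (x0 - xh))"
    using cSUP_upper[OF \<open>x \<in> Rs\<close>] by (simp add: norm_minus_commute)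
  then have "LX * norm (x - x0) \<le> LX * (SUP xh\<in>Rs. norm (x0 - xh))"
    using \<open>0 \<le> LX\<close> by (rule mult_left_mono)
  then have "norm (y - xp) \<le> LU * norm (u - ubar) + LX * (SUP xh\<in>Rs. norm (x0 - xh))"
    using assms(5) by (simp add: norm_minus_commute[of ubar u])
  with \<open>y \<in> X\<close> show ?thesis
    unfolding Fhat_def by simp
qed

lemma
  assumes "finite D" "\<And>i. i \<in> D \<Longrightarrow> y i \<in> F i"
  shows card_subset_le_card_mem: "card {i\<in>D. F i \<subseteq> A} \<le> card {i\<in>D. y i \<in> A}"
    and card_mem_le_card_meets: "card {i\<in>D. y i \<in> A} \<le> card {i\<in>D. F i \<inter> A \<noteq> {}}"
  using assms by (auto intro!: card_mono)

lemma region_in_borel: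
  assumes "closed X" "\<And>k. k \<in> K \<Longrightarrow> R k \<in> sets borel" "s' = None \<or> (\<exists>k\<in>K. s' = Some k)"
  shows "region R X s' \<in> sets borel"
  using assms by (auto simp: region_def Compl_eq_Diff_UNIV[symmetric])

theorem corollary1:
  fixes f :: "real^'n \<Rightarrow> real^'m \<Rightarrow> 'w \<Rightarrow> real^'n"
    and X :: "(real^'n) set" and U :: "(real^'m) set"
    and P :: "'a measure" and eta :: "'a \<Rightarrow> 'w"
    and LX LU :: real
    and v :: nat and R :: "nat \<Rightarrow> (real^'n) set"
    and J :: nat and Ubar :: "nat \<Rightarrow> (real^'m) set" and ubar :: "nat \<Rightarrow> real^'m"
    and s :: nat and s' :: "nat option" and j :: nat
    and I :: "real^'n \<Rightarrow> real^'m"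
    and N :: nat and xs :: "nat \<Rightarrow> real^'n" and us :: "nat \<Rightarrow> real^'m"
    and \<beta> :: real
  assumes "prob_space P"
    and "compact X"
    and "\<forall>x\<in>X. \<forall>u\<in>U. \<forall>\<omega>\<in>space P. f x u (eta \<omega>) \<in> X"
    and "\<forall>x\<in>X. \<forall>u\<in>U. (\<lambda>\<omega>. f x u (eta \<omega>)) \<in> borel_measurable P"
    and "LX > 0" and "LU > 0"
    and "\<forall>x1\<in>X. \<forall>x2\<in>X. \<forall>u1\<in>U. \<forall>u2\<in>U. \<forall>\<omega>\<in>space P.
           norm (f x1 u1 (eta \<omega>) - f x2 u2 (eta \<omega>)) \<le> LX * norm (x1 - x2) + LU * norm (u1 - u2)"
    and "\<forall>i\<in>{1..v}. R i \<noteq> {} \<and> convex (R i) \<and> polytope (closure (R i)) \<and> R i \<in> sets borel"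
    and "\<forall>i\<in>{1..v}. \<forall>k\<in>{1..v}. i \<noteq> k \<longrightarrow> R i \<inter> R k = {}"
    and "(\<Union>i\<in>{1..v}. R i) = X"
    and "\<forall>i\<in>{1..J}. ubar i \<in> Ubar i"
    and "\<forall>i\<in>{1..J}. \<forall>k\<in>{1..J}. i \<noteq> k \<longrightarrow> Ubar i \<inter> Ubar k = {}"
    and "(\<Union>i\<in>{1..J}. Ubar i) = U"
    and "s \<in> {1..v}"
    and "s' = None \<or> (\<exists>k\<in>{1..v}. s' = Some k)"
    and "j \<in> {1..J}"
    and "\<forall>x\<in>R s. I x = ubar j"
    and "\<forall>i<N. xs i \<in> X \<and> us i \<in> U"
    and "0 < \<beta>" and "\<beta> < 1"
  shows "\<exists>A\<in>sets (PiM {..<N} (\<lambda>_. P)).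
           measure (PiM {..<N} (\<lambda>_. P)) A \<ge> 1 - \<beta> \<and>
           (\<forall>\<omega>\<in>A.
              let D = {i. i < N \<and> xs i \<in> R s \<and> us i \<in> Ubar j};
                  F = (\<lambda>i. Fhat LX LU X (R s) (ubar j) (xs i) (us i)
                               (f (xs i) (us i) (eta (\<omega> i))));
                  M = card D;
                  Mc = card {i\<in>D. F i \<subseteq> region R X s'};
                  Mh = card {i\<in>D. F i \<inter> region R X s' \<noteq> {}}
              in P_lb \<beta> M Mc \<le> p_check P f eta I (R s) (region R X s') \<and>
                 p_hat P f eta I (R s) (region R X s') \<le> P_ub \<beta> M Mh)"
proof -
  interpret P: prob_space P by fact
  let ?Q = "PiM {..<N} (\<lambda>_. P)"
  define D where "D = {i. i < N \<and> xs i \<in> R s \<and> us i \<in> Ubar j}"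
  define Reg where "Reg = region R X s'"
  define F where "F \<omega> i = Fhat LX LU X (R s) (ubar j) (xs i) (us i) (f (xs i) (us i) (eta (\<omega> i)))" for \<omega> i
  have RsX: "R s \<subseteq> X" and "R s \<noteq> {}" and ubU: "ubar j \<in> U"
    using assms(8,10,11,13,14,16) by auto
  have "D \<subseteq> {..<N}" and "finite D"
    unfolding D_def by auto
  have "Reg \<in> sets borel"
    unfolding Reg_def using compact_imp_closed[OF assms(2)] assms(8,15) by (intro region_in_borel) auto
  have binomial: "has_binomial_distribution ?Q (\<lambda>\<omega>. card {i\<in>D. f x (ubar j) (eta (\<omega> i)) \<in> Reg})
      (card D) (psi P f eta I x Reg)" if "x \<in> R s" for x
  proof -
    have "{w \<in> space P. f x (ubar j) (eta w) \<in> Reg} \<in> sets P"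
      using measurable_sets[OF assms(4)[rule_format, OF subsetD[OF RsX that] ubU] \<open>Reg \<in> sets borel\<close>]
      by (simp add: vimage_def Int_def conj_commute)
    from has_binomial_distribution_card_PiM[OF assms(1) this \<open>D \<subseteq> {..<N}\<close> \<open>finite D\<close>]
    show ?thesis
      using assms(17) that by (simp add: psi_def)
  qed
  have successor_in_F: "f x (ubar j) (eta (\<omega> i)) \<in> F \<omega> i"
    if "\<omega> \<in> space ?Q" "x \<in> R s" "i \<in> D" for \<omega> x i
  proof -
    have "\<omega> i \<in> space P" "xs i \<in> X" "us i \<in> U" "x \<in> X"
      using that assms(18) RsX unfolding D_def by (auto simp: space_PiM)
    then show ?thesis
      unfolding F_def using assms(3,5,7) ubU that(2)
        compact_imp_bounded[OF assms(2), THEN bounded_subset, OF RsX]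
      by (intro mem_FhatI) auto
  qed
  have "\<exists>A\<in>sets ?Q. 1 - \<beta> \<le> measure ?Q A \<and>
    (\<forall>\<omega>\<in>A. P_lb \<beta> (card D) (card {i\<in>D. F \<omega> i \<subseteq> Reg}) \<le> (INF x\<in>R s. psi P f eta I x Reg) \<and>
       (SUP x\<in>R s. psi P f eta I x Reg) \<le> P_ub \<beta> (card D) (card {i\<in>D. F \<omega> i \<inter> Reg \<noteq> {}}))"
  proof (rule binomial_confidence_interval[OF prob_space_PiM[OF assms(1)] assms(19,20) \<open>R s \<noteq> {}\<close> _ binomial])
    show "psi P f eta I x Reg \<in> {0..1}" if "x \<in> R s" for x
      unfolding psi_def by simp
    show "card {i\<in>D. F \<omega> i \<subseteq> Reg} \<le> card {i\<in>D. f x (ubar j) (eta (\<omega> i)) \<in> Reg}"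
      "card {i\<in>D. f x (ubar j) (eta (\<omega> i)) \<in> Reg} \<le> card {i\<in>D. F \<omega> i \<inter> Reg \<noteq> {}}"
      if "x \<in> R s" "\<omega> \<in> space ?Q" for x \<omega>
      using \<open>finite D\<close> successor_in_F[OF that(2,1)]
      by (auto intro: card_subset_le_card_mem card_mem_le_card_meets)
    show "card {i\<in>D. F \<omega> i \<inter> Reg \<noteq> {}} \<le> card D" for \<omega>
      using \<open>finite D\<close> by (intro card_mono) auto
  qed
  then show ?thesis
    unfolding Let_def p_check_def p_hat_def D_def[symmetric] F_def[symmetric] Reg_def[symmetric]
    by blast
qed

end
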